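(* Let $f:(\mathbb R^2,q)\to(\mathbb R^3,p)$ be a smooth germ with a corank 1 singularity at $q$ whose curvature parabola $\Delta_p$ is a non-degenerate parabola or a half-line (equivalently, $j^2f$ is $\mathcal A^2$-equivalent to $(x,y^2,xy)$ or $(x,y^2,0)$). If $(u,v)$ is a coordinate system with $f_u(q)\ne0$ and $f_v(q)=0$, then $$v_a=\frac{(f_u\times f_{vv})\times f_u}{|(f_u\times f_{vv})\times f_u|}(q),$$ and if moreover $|f_u(q)|=|f_{vv}(q)|=1$ and $\langle f_u(q),f_{vv}(q)\rangle=0$, then $v_a=f_{vv}(q)$.
   Context: $T_pM=\operatorname{im}df_q$, $N_pM$ its orthogonal complement with a fixed orientation. First fundamental form $I(X,Y)=\langle df_qX,df_qY\rangle$; second fundamental form $II$: the symmetric bilinear map $T_q\mathbb R^2\times T_q\mathbb R^2\to N_pM$ with $II(\partial_u,\partial_u)=f_{uu}(q)^\perp$, $II(\partial_u,\partial_v)=f_{uv}(q)^\perp$, $II(\partial_v,\partial_v)=f_{vv}(q)^\perp$ ($\perp$ = orthogonal projection to $N_pM$). Curvature parabola $\Delta_p=\{II(X,X): I(X,X)=1\}\subset N_pM$. Axial vector $v_a$: if $\Delta_p$ is a non-degenerate parabola, the unit vector along its axis of symmetry pointing to its interior; if $\Delta_p$ is a half-line, the unit vector in the direction in which the half-line extends. *)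

theory Defs
  imports "HOL-Analysis.Analysis" "HOL-Analysis.Cross3"
begin

definition pd :: "real \<times> real \<Rightarrow> (real \<times> real \<Rightarrow> real^3) \<Rightarrow> real \<times> real \<Rightarrow> real^3" where
  "pd d g x = vector_derivative (\<lambda>t. g (x + t *\<^sub>R d)) (at 0)"

definition e_u :: "real \<times> real" where "e_u = (1, 0)"
definition e_v :: "real \<times> real" where "e_v = (0, 1)"

fun pds :: "(real \<times> real) list \<Rightarrow> (real \<times> real \<Rightarrow> real^3) \<Rightarrow> real \<times> real \<Rightarrow> real^3" where
  "pds [] g = g"
| "pds (d # ds) g = pd d (pds ds g)"

definition smooth_on :: "(real \<times> real) set \<Rightarrow> (real \<times> real \<Rightarrow> real^3) \<Rightarrow> bool" where
  "smooth_on S g \<longleftrightarrow> open S \<and>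
     (\<forall>ds. set ds \<subseteq> {e_u, e_v} \<longrightarrow>
        continuous_on S (pds ds g) \<and>
        (\<forall>d\<in>{e_u, e_v}. \<forall>x\<in>S. (\<lambda>t. pds ds g (x + t *\<^sub>R d)) differentiable (at 0)))"

abbreviation f_u where "f_u f \<equiv> pd e_u f"
abbreviation f_v where "f_v f \<equiv> pd e_v f"
abbreviation f_uu where "f_uu f \<equiv> pd e_u (pd e_u f)"
abbreviation f_uv where "f_uv f \<equiv> pd e_v (pd e_u f)"
abbreviation f_vv where "f_vv f \<equiv> pd e_v (pd e_v f)"

definition dfq :: "(real \<times> real \<Rightarrow> real^3) \<Rightarrow> real \<times> real \<Rightarrow> real \<times> real \<Rightarrow> real^3" where
  "dfq f q X = fst X *\<^sub>R f_u f q + snd X *\<^sub>R f_v f q"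

definition tangent_space :: "(real \<times> real \<Rightarrow> real^3) \<Rightarrow> real \<times> real \<Rightarrow> (real^3) set" where
  "tangent_space f q = range (dfq f q)"

definition normal_space :: "(real \<times> real \<Rightarrow> real^3) \<Rightarrow> real \<times> real \<Rightarrow> (real^3) set" where
  "normal_space f q = {n. \<forall>t\<in>tangent_space f q. n \<bullet> t = 0}"

definition nperp :: "(real \<times> real \<Rightarrow> real^3) \<Rightarrow> real \<times> real \<Rightarrow> real^3 \<Rightarrow> real^3" where
  "nperp f q w = (THE n. n \<in> normal_space f q \<and> w - n \<in> tangent_space f q)"

definition first_ff :: "(real \<times> real \<Rightarrow> real^3) \<Rightarrow> real \<times> real \<Rightarrow> real \<times> real \<Rightarrow> real \<times> real \<Rightarrow> real" where
  "first_ff f q X Y = dfq f q X \<bullet> dfq f q Y"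

definition second_ff :: "(real \<times> real \<Rightarrow> real^3) \<Rightarrow> real \<times> real \<Rightarrow> real \<times> real \<Rightarrow> real \<times> real \<Rightarrow> real^3" where
  "second_ff f q X Y =
     (fst X * fst Y) *\<^sub>R nperp f q (f_uu f q)
   + (fst X * snd Y + snd X * fst Y) *\<^sub>R nperp f q (f_uv f q)
   + (snd X * snd Y) *\<^sub>R nperp f q (f_vv f q)"

definition curvature_parabola :: "(real \<times> real \<Rightarrow> real^3) \<Rightarrow> real \<times> real \<Rightarrow> (real^3) set" where
  "curvature_parabola f q = {second_ff f q X X | X. first_ff f q X X = 1}"

text \<open>Non-degenerate parabola: vertex c, unit axis direction w (pointing to the interior),
  unit direction e orthogonal to the axis, and k > 0.\<close>
definition parabola_with_axis :: "(real^3) set \<Rightarrow> real^3 \<Rightarrow> bool" where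
  "parabola_with_axis P w \<longleftrightarrow> (\<exists>c e k. norm e = 1 \<and> norm w = 1 \<and> e \<bullet> w = 0 \<and> k > 0 \<and>
       P = {c + s *\<^sub>R e + (k * s\<^sup>2) *\<^sub>R w | s. True})"

definition nondeg_parabola :: "(real^3) set \<Rightarrow> bool" where
  "nondeg_parabola P \<longleftrightarrow> (\<exists>w. parabola_with_axis P w)"

definition half_line_dir :: "(real^3) set \<Rightarrow> real^3 \<Rightarrow> bool" where
  "half_line_dir P w \<longleftrightarrow> norm w = 1 \<and> (\<exists>c. P = {c + t *\<^sub>R w | t. t \<ge> 0})"

definition half_line :: "(real^3) set \<Rightarrow> bool" where
  "half_line P \<longleftrightarrow> (\<exists>w. half_line_dir P w)"

definition axial_vector :: "(real^3) set \<Rightarrow> real^3 \<Rightarrow> bool" where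
  "axial_vector P w \<longleftrightarrow>
     (nondeg_parabola P \<and> parabola_with_axis P w) \<or> (half_line P \<and> half_line_dir P w)"

end

theory Submission
  imports Defs "HOL-Computational_Algebra.Polynomial"
begin

text \<open>
Since f_v(q) = 0, the unit vectors of the first fundamental form are (+-1/|f_u|, y), so the
curvature parabola is the image of a quadratic curve y \<mapsto> A + y U + y^2 C with
C = f_vv(q)^\<perp>. If the image of such a curve is a parabola with axis w, its coordinates
s = <x - c, e> and <x - c, w> = k s^2 are quadratics in y, so comparing degrees forces <C, e> = 0;
if it is a half-line along w, the curve stays in that line. In both cases the w-coordinate is a
non-negative quadratic that is unbounded above, so <C, w> > 0 and w = C/|C|. Finally the vector
triple product gives (f_u \<times> f_vv) \<times> f_u = |f_u|^2 f_vv(q)^\<perp>.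
\<close>

definition quadratic_curve :: "'a::real_vector \<Rightarrow> 'a \<Rightarrow> 'a \<Rightarrow> real \<Rightarrow> 'a" where
  "quadratic_curve A U C y = A + y *\<^sub>R U + y\<^sup>2 *\<^sub>R C"

lemma quadratic_curve_minus_const:
  "quadratic_curve A U C y - c = quadratic_curve (A - c) U C y"
  by (simp add: quadratic_curve_def)

lemma inner_quadratic_curve:
  "quadratic_curve A U C y \<bullet> d = A \<bullet> d + (U \<bullet> d) * y + (C \<bullet> d) * y\<^sup>2"
  by (simp add: quadratic_curve_def inner_add_left)

lemma quadratic_curve_coeff_in_subspace:
  assumes "subspace S" and "\<And>y. quadratic_curve A U C y \<in> S"
  shows "C \<in> S"
proof -
  let ?g = "quadratic_curve A U C"
  have "?g 1 + ?g (-1) - 2 *\<^sub>R ?g 0 = 2 *\<^sub>R C"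
    by (simp add: quadratic_curve_def algebra_simps scaleR_2)
  moreover have "?g 1 + ?g (-1) - 2 *\<^sub>R ?g 0 \<in> S"
    using assms by (intro subspace_diff subspace_add subspace_mul) auto
  ultimately have "(1/2) *\<^sub>R (2 *\<^sub>R C) \<in> S"
    using assms(1) by (metis subspace_mul)
  then show ?thesis
    by simp
qed

lemma quadratic_eq_scaled_square_imp_linear:
  fixes a0 a1 a2 b0 b1 b2 k :: real
  assumes "\<And>y. a0 + a1 * y + a2 * y\<^sup>2 = k * (b0 + b1 * y + b2 * y\<^sup>2)\<^sup>2" and "k \<noteq> 0"
  shows "b2 = 0"
proof -
  let ?p = "[:a0 - k * b0\<^sup>2, a1 - 2 * k * b0 * b1, a2 - k * (b1\<^sup>2 + 2 * b0 * b2),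
              - 2 * k * b1 * b2, - k * b2\<^sup>2:]"
  have "poly ?p y = 0" for y
    using assms(1)[of y]
    by (simp add: algebra_simps power2_eq_square power3_eq_cube power4_eq_xxxx)
  then have "?p = 0"
    using poly_all_0_iff_0 by blast
  then show ?thesis
    using assms(2) by simp
qed

lemma quadratic_nonneg_unbounded_imp_pos:
  fixes a0 a1 a2 :: real
  assumes nonneg: "\<And>y. 0 \<le> a0 + a1 * y + a2 * y\<^sup>2"
    and unbounded: "\<And>M. \<exists>y. M \<le> a0 + a1 * y + a2 * y\<^sup>2"
  shows "0 < a2"
proof -
  have "\<not> a2 < 0"
  proof
    assume "a2 < 0"
    define y where "y = sqrt ((\<bar>a0\<bar> + 1) / - a2)"
    have "a2 * y\<^sup>2 = - (\<bar>a0\<bar> + 1)"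
      using \<open>a2 < 0\<close> by (simp add: y_def divide_nonneg_neg)
    moreover have "0 \<le> (a0 + a1 * y + a2 * y\<^sup>2) + (a0 + a1 * (-y) + a2 * (-y)\<^sup>2)"
      using nonneg[of y] nonneg[of "-y"] by simp
    ultimately show False
      by (simp add: algebra_simps)
  qed
  moreover have "a2 \<noteq> 0"
  proof
    assume "a2 = 0"
    have "a1 = 0"
    proof (rule ccontr)
      assume "a1 \<noteq> 0"
      then show False
        using nonneg[of "- (\<bar>a0\<bar> + 1) / a1"] \<open>a2 = 0\<close> by simp
    qed
    then show False
      using unbounded[of "a0 + 1"] \<open>a2 = 0\<close> by simp
  qed
  ultimately show ?thesis
    by simp
qed

lemma sgn_pos_scaleR_unit:
  fixes w :: "'a::real_normed_vector"
  assumes "C = t *\<^sub>R w" and "0 < t" and "norm w = 1"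
  shows "sgn C = w"
  using assms by (simp add: sgn_scaleR sgn_div_norm)

lemma parabola_axis_quadratic_curve:
  fixes A U C c e w :: "'a::real_inner"
  assumes curve: "range (quadratic_curve A U C) = {c + s *\<^sub>R e + (k * s\<^sup>2) *\<^sub>R w | s. True}"
    and e: "norm e = 1" and w: "norm w = 1" and ew: "e \<bullet> w = 0" and k: "k > 0"
  shows "w = sgn C"
proof -
  have ee: "e \<bullet> e = 1" and ww: "w \<bullet> w = 1" and we: "w \<bullet> e = 0"
    using e w ew by (simp_all add: norm_eq_1 inner_commute)
  have param: "\<exists>s. quadratic_curve (A - c) U C y = s *\<^sub>R e + (k * s\<^sup>2) *\<^sub>R w" for y
  proof -
    have "quadratic_curve A U C y \<in> range (quadratic_curve A U C)" by simp
    then show ?thesis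
      unfolding curve quadratic_curve_minus_const[symmetric] by (auto simp: algebra_simps)
  qed
  have on_parabola:
    "quadratic_curve (A - c) U C y \<bullet> w = k * (quadratic_curve (A - c) U C y \<bullet> e)\<^sup>2" for y
    using param[of y] by (auto simp: inner_add_left ee ww ew we)
  have "quadratic_curve (A - c) U C y \<in> span {e, w}" for y
    using param[of y] by (metis span_add span_mul span_base insertI1 insertI2)
  then have "C \<in> span {e, w}"
    by (rule quadratic_curve_coeff_in_subspace[OF subspace_span])
  then obtain a where "C - a *\<^sub>R e \<in> span {w}"
    by (auto simp: span_breakdown_eq)
  then obtain b where "C - a *\<^sub>R e = b *\<^sub>R w"
    by (auto simp: span_singleton)
  then have C: "C = a *\<^sub>R e + b *\<^sub>R w"
    by (simp add: algebra_simps)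
  have "C \<bullet> e = 0"
    using on_parabola k
    by (intro quadratic_eq_scaled_square_imp_linear[of "(A - c) \<bullet> w" "U \<bullet> w" "C \<bullet> w" k])
      (simp_all add: inner_quadratic_curve)
  then have "C = (C \<bullet> w) *\<^sub>R w"
    using C by (simp add: inner_add_left ee ww ew we)
  moreover have "0 < C \<bullet> w"
  proof (rule quadratic_nonneg_unbounded_imp_pos)
    show "0 \<le> (A - c) \<bullet> w + (U \<bullet> w) * y + (C \<bullet> w) * y\<^sup>2" for y
      using on_parabola[of y] k by (simp add: inner_quadratic_curve)
    show "\<exists>y. M \<le> (A - c) \<bullet> w + (U \<bullet> w) * y + (C \<bullet> w) * y\<^sup>2" for M
    proof -
      define s where "s = sqrt (\<bar>M\<bar> / k)"
      have "c + s *\<^sub>R e + (k * s\<^sup>2) *\<^sub>R w \<in> range (quadratic_curve A U C)"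
        unfolding curve by blast
      then obtain y where "quadratic_curve A U C y = c + s *\<^sub>R e + (k * s\<^sup>2) *\<^sub>R w"
        by auto
      then have "quadratic_curve (A - c) U C y = s *\<^sub>R e + (k * s\<^sup>2) *\<^sub>R w"
        by (simp add: quadratic_curve_minus_const[symmetric])
      then have "quadratic_curve (A - c) U C y \<bullet> w = \<bar>M\<bar>"
        using k by (simp add: inner_add_left ww ew s_def)
      then have "M \<le> (A - c) \<bullet> w + (U \<bullet> w) * y + (C \<bullet> w) * y\<^sup>2"
        using abs_ge_self[of M] by (simp add: inner_quadratic_curve)
      then show ?thesis ..
    qed
  qed
  ultimately show ?thesis
    using w sgn_pos_scaleR_unit by metis
qed

lemma half_line_axis_quadratic_curve:
  fixes A U C c w :: "'a::real_inner"
  assumes curve: "range (quadratic_curve A U C) = {c + t *\<^sub>R w | t. t \<ge> 0}"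
    and w: "norm w = 1"
  shows "w = sgn C"
proof -
  have ww: "w \<bullet> w = 1"
    using w by (simp add: norm_eq_1)
  have param: "\<exists>t\<ge>0. quadratic_curve (A - c) U C y = t *\<^sub>R w" for y
  proof -
    have "quadratic_curve A U C y \<in> range (quadratic_curve A U C)" by simp
    then show ?thesis
      unfolding curve quadratic_curve_minus_const[symmetric] by auto
  qed
  have "quadratic_curve (A - c) U C y \<in> span {w}" for y
    using param[of y] by (auto simp: span_singleton)
  then have "C \<in> span {w}"
    by (rule quadratic_curve_coeff_in_subspace[OF subspace_span])
  then have "C = (C \<bullet> w) *\<^sub>R w"
    by (auto simp: span_singleton ww)
  moreover have "0 < C \<bullet> w"
  proof (rule quadratic_nonneg_unbounded_imp_pos)
    show "0 \<le> (A - c) \<bullet> w + (U \<bullet> w) * y + (C \<bullet> w) * y\<^sup>2" for y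
      using param[of y] by (auto simp: inner_quadratic_curve[symmetric] ww)
    show "\<exists>y. M \<le> (A - c) \<bullet> w + (U \<bullet> w) * y + (C \<bullet> w) * y\<^sup>2" for M
    proof -
      have "c + \<bar>M\<bar> *\<^sub>R w \<in> range (quadratic_curve A U C)"
        unfolding curve by auto
      then obtain y where "quadratic_curve A U C y = c + \<bar>M\<bar> *\<^sub>R w"
        by auto
      then have "quadratic_curve (A - c) U C y \<bullet> w = \<bar>M\<bar>"
        by (simp add: quadratic_curve_minus_const[symmetric] ww)
      then have "M \<le> (A - c) \<bullet> w + (U \<bullet> w) * y + (C \<bullet> w) * y\<^sup>2"
        using abs_ge_self[of M] by (simp add: inner_quadratic_curve)
      then show ?thesis ..
    qed
  qed
  ultimately show ?thesis
    using w sgn_pos_scaleR_unit by metis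
qed

lemma axial_vector_quadratic_curve:
  assumes "axial_vector (range (quadratic_curve A U C)) w"
  shows "w = sgn C"
  using assms unfolding axial_vector_def parabola_with_axis_def half_line_dir_def
proof (elim disjE conjE exE)
  fix c e k
  assume "norm e = 1" "norm w = 1" "e \<bullet> w = 0" "0 < k"
    and "range (quadratic_curve A U C) = {c + s *\<^sub>R e + (k * s\<^sup>2) *\<^sub>R w | s. True}"
  then show ?thesis
    using parabola_axis_quadratic_curve by blast
next
  fix c
  assume "norm w = 1" and "range (quadratic_curve A U C) = {c + t *\<^sub>R w | t. t \<ge> 0}"
  then show ?thesis
    using half_line_axis_quadratic_curve by blast
qed

lemma cross3_cross3_self:
  fixes a b :: "real^3"
  shows "cross3 (cross3 a b) a = (a \<bullet> a) *\<^sub>R b - (a \<bullet> b) *\<^sub>R a"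
  by (simp add: cross3_simps forall_3)

lemma tangent_space_f_v_zero:
  assumes "f_v f q = 0"
  shows "tangent_space f q = range (\<lambda>t. t *\<^sub>R f_u f q)"
  using assms unfolding tangent_space_def dfq_def by (auto simp: image_iff)

lemma nperp_f_v_zero:
  assumes fu: "f_u f q \<noteq> 0" and fv: "f_v f q = 0"
  shows "nperp f q z = z - (z \<bullet> f_u f q / (f_u f q \<bullet> f_u f q)) *\<^sub>R f_u f q"
proof -
  define a where "a = f_u f q"
  have aa: "a \<bullet> a \<noteq> 0"
    using fu by (simp add: a_def)
  have T: "tangent_space f q = range (\<lambda>t. t *\<^sub>R a)"
    using tangent_space_f_v_zero[OF fv] by (simp add: a_def)
  have N: "normal_space f q = {n. n \<bullet> a = 0}"
    unfolding normal_space_def T by auto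
  show ?thesis
    unfolding nperp_def a_def[symmetric]
  proof (rule the_equality)
    show "z - (z \<bullet> a / (a \<bullet> a)) *\<^sub>R a \<in> normal_space f q
        \<and> z - (z - (z \<bullet> a / (a \<bullet> a)) *\<^sub>R a) \<in> tangent_space f q"
      unfolding N T using aa by (auto simp: inner_diff_left)
  next
    fix n
    assume "n \<in> normal_space f q \<and> z - n \<in> tangent_space f q"
    then obtain t where n: "n \<bullet> a = 0" and "z - n = t *\<^sub>R a"
      unfolding N T by auto
    then have t: "n = z - t *\<^sub>R a"
      by (simp add: algebra_simps)
    then have "z \<bullet> a - t * (a \<bullet> a) = 0"
      using n by (simp add: inner_diff_left)
    then have "t = z \<bullet> a / (a \<bullet> a)"
      using aa by (simp add: field_simps)
    then show "n = z - (z \<bullet> a / (a \<bullet> a)) *\<^sub>R a"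
      using t by simp
  qed
qed

lemma cross3_cross3_f_v_zero:
  assumes "f_u f q \<noteq> 0" and "f_v f q = 0"
  shows "cross3 (cross3 (f_u f q) z) (f_u f q) = (f_u f q \<bullet> f_u f q) *\<^sub>R nperp f q z"
  using assms by (simp add: cross3_cross3_self nperp_f_v_zero algebra_simps inner_commute)

lemma curvature_parabola_f_v_zero:
  assumes fu: "f_u f q \<noteq> 0" and fv: "f_v f q = 0"
  shows "curvature_parabola f q = range (quadratic_curve
           ((1 / (f_u f q \<bullet> f_u f q)) *\<^sub>R nperp f q (f_uu f q))
           ((2 / norm (f_u f q)) *\<^sub>R nperp f q (f_uv f q))
           (nperp f q (f_vv f q)))"
    (is "_ = range ?g")
proof -
  define a where "a = f_u f q"
  define A where "A = nperp f q (f_uu f q)"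
  define B where "B = nperp f q (f_uv f q)"
  define C where "C = nperp f q (f_vv f q)"
  have na: "norm a > 0" and aa: "a \<bullet> a = (norm a)\<^sup>2"
    using fu by (simp_all add: a_def power2_norm_eq_inner)
  have I: "first_ff f q (x, y) (x, y) = x\<^sup>2 * (a \<bullet> a)" for x y
    unfolding first_ff_def dfq_def fv a_def by (simp add: power2_eq_square)
  have II: "second_ff f q (x, y) (x, y) = x\<^sup>2 *\<^sub>R A + (2 * x * y) *\<^sub>R B + y\<^sup>2 *\<^sub>R C" for x y
    unfolding second_ff_def A_def B_def C_def by (simp add: power2_eq_square algebra_simps)
  have g: "?g y = second_ff f q (1 / norm a, y) (1 / norm a, y)" for y
    unfolding II quadratic_curve_def
    unfolding a_def[symmetric] A_def[symmetric] B_def[symmetric] C_def[symmetric]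
    using aa by (simp add: algebra_simps power_divide)
  text \<open>A unit vector for the first fundamental form is (+-1/|f_u|, y); the sign of the first
    coordinate is absorbed by replacing y with -y.\<close>
  have "first_ff f q (x, y) (x, y) = 1 \<longleftrightarrow> x = 1 / norm a \<or> x = - (1 / norm a)" for x y
  proof -
    have "first_ff f q (x, y) (x, y) = 1 \<longleftrightarrow> (x * norm a)\<^sup>2 = 1"
      unfolding I aa by (simp add: power_mult_distrib)
    also have "\<dots> \<longleftrightarrow> x * norm a = 1 \<or> x * norm a = - 1"
      by (rule power2_eq_1_iff)
    also have "\<dots> \<longleftrightarrow> x = 1 / norm a \<or> x = - (1 / norm a)"
      using na by (auto simp: field_simps)
    finally show ?thesis .
  qed
  moreover have "second_ff f q (- (1 / norm a), y) (- (1 / norm a), y) = ?g (- y)" for y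
    unfolding g II by simp
  ultimately show ?thesis
    unfolding curvature_parabola_def using g by (fastforce simp: image_iff)
qed

theorem mainTheorem6:
  fixes f :: "real \<times> real \<Rightarrow> real^3" and q :: "real \<times> real"
  assumes smooth: "\<exists>S. q \<in> S \<and> smooth_on S f"
    and corank1: "dim (tangent_space f q) = 1"
    and parab: "nondeg_parabola (curvature_parabola f q) \<or> half_line (curvature_parabola f q)"
    and fu: "f_u f q \<noteq> 0"
    and fv: "f_v f q = 0"
  shows "(\<forall>w. axial_vector (curvature_parabola f q) w \<longleftrightarrow>
            w = (1 / norm (cross3 (cross3 (f_u f q) (f_vv f q)) (f_u f q)))
                  *\<^sub>R cross3 (cross3 (f_u f q) (f_vv f q)) (f_u f q))
       \<and> (norm (f_u f q) = 1 \<and> norm (f_vv f q) = 1 \<and> f_u f q \<bullet> f_vv f q = 0 \<longrightarrow>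
            (\<forall>w. axial_vector (curvature_parabola f q) w \<longleftrightarrow> w = f_vv f q))"
proof -
  define a b where "a = f_u f q" and "b = f_vv f q"
  define K where "K = cross3 (cross3 a b) a"
  obtain A U where curve: "curvature_parabola f q = range (quadratic_curve A U (nperp f q b))"
    using curvature_parabola_f_v_zero[OF fu fv] by (auto simp: b_def)
  have "sgn K = sgn (nperp f q b)"
    using cross3_cross3_f_v_zero[OF fu fv] fu by (simp add: K_def a_def sgn_scaleR)
  then have axial_imp: "axial_vector (curvature_parabola f q) w \<Longrightarrow> w = sgn K" for w
    using axial_vector_quadratic_curve curve by metis
  obtain w0 where "axial_vector (curvature_parabola f q) w0"
    using parab unfolding axial_vector_def nondeg_parabola_def half_line_def by blast
  then have axial: "axial_vector (curvature_parabola f q) w \<longleftrightarrow> w = sgn K" for w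
    using axial_imp by blast
  have orthonormal: "sgn K = b" if "norm a = 1" "norm b = 1" "a \<bullet> b = 0"
  proof -
    have "a \<bullet> a = 1"
      using that(1) by (simp add: norm_eq_1)
    then show ?thesis
      using that by (simp add: K_def cross3_cross3_self sgn_div_norm)
  qed
  have "sgn K = (1 / norm K) *\<^sub>R K"
    by (simp add: sgn_div_norm inverse_eq_divide)
  then show ?thesis
    using axial orthonormal unfolding a_def b_def K_def by metis
qed

end
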